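(* Let $m,t,n$ be positive integers with $mt<n\le 2^m$, let $\alpha=(\alpha_1,\dots,\alpha_n)\in\mathbb{F}_{2^m}^n$ be a support tuple, let $p\in\mathbb{F}_2^n$ with $0<\mathrm{wt}(p)\le t$, let $d\in\mathbb{N}$ with $d<t$, and let $\varepsilon\in\mathbb{F}_{2^m}$. Let $\sigma_p(x)=\prod_{i\in I_p}(x-\alpha_i)$ and $\tilde\sigma_p(x)=\varepsilon x^d+\sigma_p(x)$, and let $\tilde p\in\mathbb{F}_2^n$ be defined by $\tilde p_i=1$ if and only if $\tilde\sigma_p(\alpha_i)=0$ (for $i=1,\dots,n$). Then: (a) If $\mathrm{wt}(\tilde p)>\mathrm{wt}(p)$, then $\varepsilon\neq 0$. (b) Either $p=\tilde p$ or $\#(I_p\cap I_{\tilde p})\le 1$. (c) If $\varepsilon\neq 0$, then for $i\in\{1,\dots,n\}$ we have $I_p\cap I_{\tilde p}=\{i\}$ if and only if $i\in I_p$, $\alpha_i=0$, and $d>0$.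
   Context: $\mathbb{F}_{2^m}$ denotes the finite field with $2^m$ elements. A support tuple is a tuple $\alpha=(\alpha_1,\dots,\alpha_n)\in\mathbb{F}_{2^m}^n$ with $\alpha_i\neq\alpha_j$ for $i\neq j$. For $c=(c_1,\dots,c_n)\in\mathbb{F}_2^n$, $I_c=\{i\in\{1,\dots,n\}\mid c_i=1\}$ and $\mathrm{wt}(c)=\#I_c$ is the Hamming weight. The triple $(p,d,\tilde p)$ models a fault injection into the $d$-th coefficient of the error-locator polynomial $\sigma_p$ during decryption, with the fault $\varepsilon$. *)

theory Defs
  imports "HOL-Computational_Algebra.Polynomial"
begin

text \<open>Binary words c in F_2^n are modelled as predicates c :: nat => bool on the
index set {1..n} (c i = True iff c_i = 1), vanishing outside {1..n}.\<close>

definition Iset :: "nat \<Rightarrow> (nat \<Rightarrow> bool) \<Rightarrow> nat set" where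
  "Iset n c = {i \<in> {1..n}. c i}"

definition wt :: "nat \<Rightarrow> (nat \<Rightarrow> bool) \<Rightarrow> nat" where
  "wt n c = card (Iset n c)"

definition support_tuple :: "nat \<Rightarrow> (nat \<Rightarrow> 'a) \<Rightarrow> bool" where
  "support_tuple n \<alpha> \<longleftrightarrow> inj_on \<alpha> {1..n}"

definition sigma :: "(nat \<Rightarrow> 'a::comm_ring_1) \<Rightarrow> nat set \<Rightarrow> 'a poly" where
  "sigma \<alpha> I = (\<Prod>i\<in>I. [:- \<alpha> i, 1:])"

definition sigma_tilde :: "nat \<Rightarrow> (nat \<Rightarrow> 'a::comm_ring_1) \<Rightarrow> (nat \<Rightarrow> bool) \<Rightarrow> nat \<Rightarrow> 'a \<Rightarrow> 'a poly" where
  "sigma_tilde n \<alpha> p d \<epsilon> = monom \<epsilon> d + sigma \<alpha> (Iset n p)"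

definition p_tilde :: "nat \<Rightarrow> (nat \<Rightarrow> 'a::comm_ring_1) \<Rightarrow> (nat \<Rightarrow> bool) \<Rightarrow> nat \<Rightarrow> 'a \<Rightarrow> nat \<Rightarrow> bool" where
  "p_tilde n \<alpha> p d \<epsilon> = (\<lambda>i. i \<in> {1..n} \<and> poly (sigma_tilde n \<alpha> p d \<epsilon>) (\<alpha> i) = 0)"

end

theory Submission
  imports Defs
begin

text \<open>At an index \<open>i \<in> I\<^sub>p\<close> the locator \<open>\<sigma>\<^sub>p\<close> vanishes, so the faulty locator takes the value
  \<open>\<epsilon> \<alpha>\<^sub>i\<^sup>d\<close> there.
  Hence a zero fault changes nothing, while a nonzero fault keeps exactly those \<open>i \<in> I\<^sub>p\<close>
  with \<open>\<alpha>\<^sub>i = 0\<close> and \<open>d > 0\<close>; by injectivity of the support there is at most one such index.\<close>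

lemma finite_Iset [simp]: "finite (Iset n c)"
  unfolding Iset_def by simp

lemma mem_Iset_iff:
  assumes "\<forall>i. c i \<longrightarrow> i \<in> {1..n}"
  shows "i \<in> Iset n c \<longleftrightarrow> c i"
  using assms unfolding Iset_def by auto

lemma poly_sigma_eq_0_iff:
  fixes \<alpha> :: "nat \<Rightarrow> 'a::idom"
  assumes "inj_on \<alpha> A" and "I \<subseteq> A" and "finite I" and "j \<in> A"
  shows "poly (sigma \<alpha> I) (\<alpha> j) = 0 \<longleftrightarrow> j \<in> I"
proof -
  have "poly (sigma \<alpha> I) (\<alpha> j) = (\<Prod>i\<in>I. \<alpha> j - \<alpha> i)"
    unfolding sigma_def by (simp add: poly_prod)
  also have "\<dots> = 0 \<longleftrightarrow> (\<exists>i\<in>I. \<alpha> j = \<alpha> i)"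
    using \<open>finite I\<close> by simp
  also have "\<dots> \<longleftrightarrow> j \<in> I"
    using assms by (auto dest: inj_onD)
  finally show ?thesis .
qed

lemma poly_sigma_root:
  assumes "finite I" and "i \<in> I"
  shows "poly (sigma \<alpha> I) (\<alpha> i) = 0"
  using assms unfolding sigma_def by (auto simp: poly_prod intro!: prod_zero)

lemma poly_sigma_tilde:
  "poly (sigma_tilde n \<alpha> p d \<epsilon>) x = \<epsilon> * x ^ d + poly (sigma \<alpha> (Iset n p)) x"
  unfolding sigma_tilde_def by (simp add: poly_monom)

lemma p_tilde_zero_fault:
  fixes \<alpha> :: "nat \<Rightarrow> 'a::idom"
  assumes "support_tuple n \<alpha>" and "\<forall>i. p i \<longrightarrow> i \<in> {1..n}"
  shows "p_tilde n \<alpha> p d 0 = p"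
proof
  fix i
  have "inj_on \<alpha> {1..n}" and "Iset n p \<subseteq> {1..n}"
    using assms(1) unfolding support_tuple_def Iset_def by auto
  then show "p_tilde n \<alpha> p d 0 i = p i"
    using poly_sigma_eq_0_iff[of \<alpha> "{1..n}" "Iset n p" i] assms(2)
    unfolding p_tilde_def poly_sigma_tilde by (auto simp: mem_Iset_iff)
qed

lemma Iset_inter_p_tilde:
  fixes \<alpha> :: "nat \<Rightarrow> 'a::idom"
  assumes "\<epsilon> \<noteq> 0"
  shows "Iset n p \<inter> Iset n (p_tilde n \<alpha> p d \<epsilon>) = {i \<in> Iset n p. \<alpha> i = 0 \<and> 0 < d}"
proof -
  have "p_tilde n \<alpha> p d \<epsilon> i \<longleftrightarrow> \<alpha> i = 0 \<and> 0 < d" if "i \<in> Iset n p" for i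
  proof -
    have "p_tilde n \<alpha> p d \<epsilon> i \<longleftrightarrow> \<epsilon> * \<alpha> i ^ d = 0"
      using that poly_sigma_root[OF finite_Iset that, where \<alpha> = \<alpha>]
      unfolding p_tilde_def poly_sigma_tilde Iset_def by auto
    then show ?thesis
      using assms by (simp add: power_0_left)
  qed
  then show ?thesis
    unfolding Iset_def by auto
qed

lemma card_fibre_inj_on_le_1:
  assumes "inj_on f A"
  shows "card {x \<in> A. f x = y} \<le> 1"
  unfolding One_nat_def using assms
  by (cases "finite {x \<in> A. f x = y}") (auto simp: card_le_Suc0_iff_eq dest: inj_onD)

theorem proposition4p7:
  fixes m t n d :: nat and \<alpha> :: "nat \<Rightarrow> 'a::{field,finite}" and p :: "nat \<Rightarrow> bool" and \<epsilon> :: 'a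
  assumes "card (UNIV :: 'a set) = 2 ^ m"
    and "m > 0" and "t > 0" and "n > 0"
    and "m * t < n" and "n \<le> 2 ^ m"
    and "support_tuple n \<alpha>"
    and "\<forall>i. p i \<longrightarrow> i \<in> {1..n}"
    and "0 < wt n p" and "wt n p \<le> t"
    and "d < t"
  shows "(wt n (p_tilde n \<alpha> p d \<epsilon>) > wt n p \<longrightarrow> \<epsilon> \<noteq> 0)
       \<and> (p = p_tilde n \<alpha> p d \<epsilon> \<or> card (Iset n p \<inter> Iset n (p_tilde n \<alpha> p d \<epsilon>)) \<le> 1)
       \<and> (\<epsilon> \<noteq> 0 \<longrightarrow> (\<forall>i\<in>{1..n}.
            Iset n p \<inter> Iset n (p_tilde n \<alpha> p d \<epsilon>) = {i} \<longleftrightarrow> (i \<in> Iset n p \<and> \<alpha> i = 0 \<and> d > 0)))"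
proof -
  have inj: "inj_on \<alpha> {1..n}"
    using assms(7) unfolding support_tuple_def .
  have zero_fault: "\<epsilon> = 0 \<Longrightarrow> p_tilde n \<alpha> p d \<epsilon> = p"
    using p_tilde_zero_fault[OF assms(7,8)] by simp
  have common: "Iset n p \<inter> Iset n (p_tilde n \<alpha> p d \<epsilon>) = {i \<in> Iset n p. \<alpha> i = 0 \<and> 0 < d}"
    if "\<epsilon> \<noteq> 0" using Iset_inter_p_tilde[OF that] .
  have "card {i \<in> Iset n p. \<alpha> i = 0 \<and> 0 < d} \<le> card {i \<in> {1..n}. \<alpha> i = 0}"
    by (rule card_mono) (auto simp: Iset_def)
  also have "\<dots> \<le> 1"
    using card_fibre_inj_on_le_1[OF inj] .
  finally have "card {i \<in> Iset n p. \<alpha> i = 0 \<and> 0 < d} \<le> 1" .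
  then have "p = p_tilde n \<alpha> p d \<epsilon> \<or> card (Iset n p \<inter> Iset n (p_tilde n \<alpha> p d \<epsilon>)) \<le> 1"
    using zero_fault common by (cases "\<epsilon> = 0") auto
  moreover have "Iset n p \<inter> Iset n (p_tilde n \<alpha> p d \<epsilon>) = {i} \<longleftrightarrow> i \<in> Iset n p \<and> \<alpha> i = 0 \<and> d > 0"
    if "\<epsilon> \<noteq> 0" for i
    unfolding common[OF that] using inj_onD[OF inj] by (auto simp: Iset_def)
  ultimately show ?thesis
    using zero_fault by auto
qed

end
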